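(* Consider an MILP instance $\min\{\mathbf{c}\mathbf{x} \mid A\mathbf{x}=\mathbf{b},\ \mathbf{l}\le\mathbf{x}\le\mathbf{u},\ \mathbf{x}\in\mathbb{Z}^z\times\mathbb{Q}^q\}$ with $A=(A_{\mathbb{Z}}\ A_{\mathbb{Q}})$, $\mathbf{x}=(\mathbf{x}_{\mathbb{Z}},\mathbf{x}_{\mathbb{Q}})$, $\mathbf{c}=(\mathbf{c}_{\mathbb{Z}},\mathbf{c}_{\mathbb{Q}})$, $\mathbf{l}=(\mathbf{l}_{\mathbb{Z}},\mathbf{l}_{\mathbb{Q}})$, $\mathbf{u}=(\mathbf{u}_{\mathbb{Z}},\mathbf{u}_{\mathbb{Q}})$ split into integer and rational parts, which has an optimal solution, and let $M$ be its fractionality and $\tilde M := M!$. Consider the integralized instance $\min\{(\tilde M\mathbf{c}_{\mathbb{Z}},\mathbf{c}_{\mathbb{Q}})\mathbf{z} \mid (\tilde M A_{\mathbb{Z}}\ A_{\mathbb{Q}})\mathbf{z} = \tilde M\mathbf{b},\ (\mathbf{l}_{\mathbb{Z}},\tilde M\mathbf{l}_{\mathbb{Q}}) \le (\mathbf{z}_{\mathbb{Z}},\mathbf{z}_{\mathbb{Q}}) \le (\mathbf{u}_{\mathbb{Z}},\tilde M\mathbf{u}_{\mathbb{Q}}),\ \mathbf{z}\in\mathbb{Z}^{z+q}\}$. If $\mathbf{z}=(\mathbf{z}_{\mathbb{Z}},\mathbf{z}_{\mathbb{Q}})\in\mathbb{Z}^{z+q}$ is an optimal solution of the integralized instance, then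 $\mathbf{x}=(\mathbf{z}_{\mathbb{Z}},\frac{1}{\tilde M}\mathbf{z}_{\mathbb{Q}})$ is an optimal solution of the original MILP instance.
   Context: The fractionality of an MILP instance is the minimum, over all optimal solutions $\mathbf{x}$, of the largest denominator among the entries of $\mathbf{x}$ written in lowest terms. *)

theory Defs
  imports Complex_Main
begin

text \<open>Vectors are functions nat => rat, only the
  entries with index < n (resp. < m for b) are meaningful; the variables with index
  j < z are the integer ones, those with z <= j < n the rational ones.\<close>

definition milp_feasible ::
  "nat \<Rightarrow> nat \<Rightarrow> nat \<Rightarrow> (nat \<Rightarrow> nat \<Rightarrow> rat) \<Rightarrow> (nat \<Rightarrow> rat) \<Rightarrow> (nat \<Rightarrow> rat) \<Rightarrow> (nat \<Rightarrow> rat)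
    \<Rightarrow> (nat \<Rightarrow> rat) \<Rightarrow> bool" where
  "milp_feasible m n z A b l u x \<longleftrightarrow>
     (\<forall>i<m. (\<Sum>j<n. A i j * x j) = b i) \<and>
     (\<forall>j<n. l j \<le> x j \<and> x j \<le> u j) \<and>
     (\<forall>j<z. x j \<in> \<int>)"

definition milp_obj :: "nat \<Rightarrow> (nat \<Rightarrow> rat) \<Rightarrow> (nat \<Rightarrow> rat) \<Rightarrow> rat" where
  "milp_obj n c x = (\<Sum>j<n. c j * x j)"

definition milp_optimal ::
  "nat \<Rightarrow> nat \<Rightarrow> nat \<Rightarrow> (nat \<Rightarrow> rat) \<Rightarrow> (nat \<Rightarrow> nat \<Rightarrow> rat) \<Rightarrow> (nat \<Rightarrow> rat) \<Rightarrow> (nat \<Rightarrow> rat)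
    \<Rightarrow> (nat \<Rightarrow> rat) \<Rightarrow> (nat \<Rightarrow> rat) \<Rightarrow> bool" where
  "milp_optimal m n z c A b l u x \<longleftrightarrow>
     milp_feasible m n z A b l u x \<and>
     (\<forall>y. milp_feasible m n z A b l u y \<longrightarrow> milp_obj n c x \<le> milp_obj n c y)"

definition rat_denom :: "rat \<Rightarrow> nat" where
  "rat_denom r = nat (snd (quotient_of r))"

definition max_denom :: "nat \<Rightarrow> (nat \<Rightarrow> rat) \<Rightarrow> nat" where
  "max_denom n x = Max (insert 1 (rat_denom ` x ` {..<n}))"

definition fractionality ::
  "nat \<Rightarrow> nat \<Rightarrow> nat \<Rightarrow> (nat \<Rightarrow> rat) \<Rightarrow> (nat \<Rightarrow> nat \<Rightarrow> rat) \<Rightarrow> (nat \<Rightarrow> rat) \<Rightarrow> (nat \<Rightarrow> rat)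
    \<Rightarrow> (nat \<Rightarrow> rat) \<Rightarrow> nat" where
  "fractionality m n z c A b l u =
     (LEAST d. \<exists>x. milp_optimal m n z c A b l u x \<and> max_denom n x = d)"

end

theory Submission
  imports Defs
begin

text \<open>Let \<open>K = M!\<close>. The map \<open>x \<mapsto> (x\<^sub>\<int>, K x\<^sub>\<rat>)\<close> identifies the feasible points of the
  original instance whose scaled rational part is integral with the feasible points of the
  integralized instance, and it multiplies the objective by \<open>K\<close>. An optimal solution all of
  whose denominators are at most \<open>M\<close> (one exists by definition of \<open>M\<close>) has an integral image,
  because every such denominator divides \<open>M!\<close>. Hence the integralized optimum is at most \<open>K\<close>
  times the original optimum, and scaling an integralized optimum back gives a feasible point
  that is no worse than the original optimum.\<close>

lemma rat_denom_pos: "rat_denom r > 0"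
  unfolding rat_denom_def
  by (metis quotient_of_denom_pos prod.collapse zero_less_nat_eq)

lemma of_nat_mult_Ints_if_rat_denom_dvd:
  assumes "rat_denom r dvd k"
  shows "of_nat k * r \<in> \<int>"
proof -
  obtain a d where q: "quotient_of r = (a, d)" by (cases "quotient_of r")
  have "d > 0" using quotient_of_denom_pos[OF q] .
  hence "int (rat_denom r) = d" unfolding rat_denom_def q by simp
  moreover have "int (rat_denom r) dvd int k" using assms by simp
  ultimately obtain k' where k: "int k = d * k'" by (auto elim: dvdE)
  have "of_nat k * r = of_int (int k) * (of_int a / of_int d)"
    using quotient_of_div[OF q] by simp
  also have "\<dots> = of_int (k' * a)"
    using k \<open>d > 0\<close> by simp
  finally show ?thesis by simp
qed

lemma of_nat_fact_mult_Ints_if_rat_denom_le: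
  assumes "rat_denom r \<le> M"
  shows "of_nat (fact M) * r \<in> \<int>"
proof -
  have "rat_denom r dvd fact M"
    using assms rat_denom_pos[of r] by (intro dvd_fact) (auto simp: Suc_le_eq)
  thus ?thesis by (rule of_nat_mult_Ints_if_rat_denom_dvd)
qed

lemma rat_denom_le_max_denom: "j < n \<Longrightarrow> rat_denom (x j) \<le> max_denom n x"
  unfolding max_denom_def by (intro Max_ge) auto

lemma fractionality_attained:
  assumes "\<exists>x. milp_optimal m n z c A b l u x"
  obtains x where "milp_optimal m n z c A b l u x"
    and "max_denom n x = fractionality m n z c A b l u"
  using LeastI_ex[of "\<lambda>d. \<exists>x. milp_optimal m n z c A b l u x \<and> max_denom n x = d"] assms
  unfolding fractionality_def by blast

lemma milp_optimal_if_obj_le_optimal: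
  assumes "milp_optimal m n z c A b l u x"
    and "milp_feasible m n z A b l u y"
    and "milp_obj n c y \<le> milp_obj n c x"
  shows "milp_optimal m n z c A b l u y"
  using assms unfolding milp_optimal_def by force

definition scale_integer_part :: "nat \<Rightarrow> rat \<Rightarrow> (nat \<Rightarrow> rat) \<Rightarrow> nat \<Rightarrow> rat" where
  "scale_integer_part z K v = (\<lambda>j. if j < z then K * v j else v j)"

definition scale_rational_part :: "nat \<Rightarrow> rat \<Rightarrow> (nat \<Rightarrow> rat) \<Rightarrow> nat \<Rightarrow> rat" where
  "scale_rational_part z K v = (\<lambda>j. if j < z then v j else K * v j)"

lemma scale_rational_part_inverse:
  "K \<noteq> 0 \<Longrightarrow> scale_rational_part z K (\<lambda>j. if j < z then v j else v j / K) = v"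
  unfolding scale_rational_part_def by auto

lemma sum_scale_parts:
  "(\<Sum>j<n. scale_integer_part z K a j * scale_rational_part z K x j) = K * (\<Sum>j<n. a j * x j)"
  unfolding sum_distrib_left scale_integer_part_def scale_rational_part_def
  by (rule sum.cong) auto

lemma milp_obj_scale_parts:
  "milp_obj n (scale_integer_part z K c) (scale_rational_part z K x) = K * milp_obj n c x"
  unfolding milp_obj_def by (rule sum_scale_parts)

lemma milp_feasible_scale_parts_iff:
  assumes "K > 0" and "z \<le> n"
  shows "milp_feasible m n n (\<lambda>i. scale_integer_part z K (A i)) (\<lambda>i. K * b i)
           (scale_rational_part z K l) (scale_rational_part z K u) (scale_rational_part z K x)
         \<longleftrightarrow> milp_feasible m n z A b l u x \<and> (\<forall>j. z \<le> j \<and> j < n \<longrightarrow> K * x j \<in> \<int>)"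
proof -
  have "scale_rational_part z K v j \<le> scale_rational_part z K w j \<longleftrightarrow> v j \<le> w j" for v w j
    using \<open>K > 0\<close> unfolding scale_rational_part_def by simp
  moreover have "(\<forall>j<n. scale_rational_part z K x j \<in> \<int>)
      \<longleftrightarrow> (\<forall>j<z. x j \<in> \<int>) \<and> (\<forall>j. z \<le> j \<and> j < n \<longrightarrow> K * x j \<in> \<int>)"
    using \<open>z \<le> n\<close> unfolding scale_rational_part_def by (force simp: not_less)
  ultimately show ?thesis
    using \<open>K > 0\<close> unfolding milp_feasible_def sum_scale_parts by auto
qed

theorem lemma4:
  fixes m z q :: nat
    and A :: "nat \<Rightarrow> nat \<Rightarrow> rat"
    and b c l u :: "nat \<Rightarrow> rat"
    and zz :: "nat \<Rightarrow> rat"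
  assumes has_opt: "\<exists>x. milp_optimal m (z + q) z c A b l u x"
    and zz_opt: "milp_optimal m (z + q) (z + q)
                   (\<lambda>j. if j < z then of_nat (fact (fractionality m (z + q) z c A b l u)) * c j else c j)
                   (\<lambda>i j. if j < z then of_nat (fact (fractionality m (z + q) z c A b l u)) * A i j else A i j)
                   (\<lambda>i. of_nat (fact (fractionality m (z + q) z c A b l u)) * b i)
                   (\<lambda>j. if j < z then l j else of_nat (fact (fractionality m (z + q) z c A b l u)) * l j)
                   (\<lambda>j. if j < z then u j else of_nat (fact (fractionality m (z + q) z c A b l u)) * u j)
                   zz"
  shows "milp_optimal m (z + q) z c A b l u
           (\<lambda>j. if j < z then zz j else zz j / of_nat (fact (fractionality m (z + q) z c A b l u)))"
proof -
  define n where "n = z + q"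
  define M where "M = fractionality m n z c A b l u"
  define K :: rat where "K = of_nat (fact M)"
  define x where "x = (\<lambda>j. if j < z then zz j else zz j / K)"
  have "K > 0" "z \<le> n" unfolding K_def n_def by simp_all
  have zz: "zz = scale_rational_part z K x"
    unfolding x_def using scale_rational_part_inverse \<open>K > 0\<close> by simp
  have zz_opt: "milp_optimal m n n (scale_integer_part z K c) (\<lambda>i. scale_integer_part z K (A i))
      (\<lambda>i. K * b i) (scale_rational_part z K l) (scale_rational_part z K u) zz"
    using zz_opt unfolding scale_integer_part_def scale_rational_part_def K_def M_def n_def .
  obtain x' where x'_opt: "milp_optimal m n z c A b l u x'" and "max_denom n x' = M"
    using fractionality_attained has_opt unfolding M_def n_def by blast
  hence "K * x' j \<in> \<int>" if "j < n" for j
    using rat_denom_le_max_denom[OF that] of_nat_fact_mult_Ints_if_rat_denom_le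
    unfolding K_def by blast
  hence "milp_feasible m n n (\<lambda>i. scale_integer_part z K (A i)) (\<lambda>i. K * b i)
      (scale_rational_part z K l) (scale_rational_part z K u) (scale_rational_part z K x')"
    using x'_opt milp_feasible_scale_parts_iff[OF \<open>K > 0\<close> \<open>z \<le> n\<close>]
    unfolding milp_optimal_def by blast
  hence "milp_obj n (scale_integer_part z K c) zz
      \<le> milp_obj n (scale_integer_part z K c) (scale_rational_part z K x')"
    using zz_opt unfolding milp_optimal_def by blast
  hence "milp_obj n c x \<le> milp_obj n c x'"
    unfolding zz milp_obj_scale_parts using \<open>K > 0\<close> by simp
  moreover have "milp_feasible m n z A b l u x"
    using zz_opt milp_feasible_scale_parts_iff[OF \<open>K > 0\<close> \<open>z \<le> n\<close>]
    unfolding milp_optimal_def zz by blast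
  ultimately have "milp_optimal m n z c A b l u x"
    using milp_optimal_if_obj_le_optimal[OF x'_opt] by blast
  thus ?thesis unfolding x_def K_def M_def n_def .
qed

end
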